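(* Let $\mathcal{N}$ be a power network description as in the context, with private line conductances $\mathbf{g}=(g_{ij})_{(i,j)\in E}\in\mathbb{R}^n$ and susceptances $\mathbf{b}=(b_{ij})_{(i,j)\in E}\in\mathbb{R}^n$. Fix $\alpha>0$, $\epsilon>0$, $\beta>0$ and $\lambda>0$. Then the Power Lines Obfuscation (PLO) mechanism described in the context, viewed as a randomized algorithm that maps the private line-parameter data to the released network description $\dot{\mathcal{N}}$, is $\epsilon$-differentially private with respect to the $\alpha$-indistinguishability adjacency relation.
   Context: Network data: a set of buses $N$ ($|N|=m$), a set $E$ of $n$ directed lines (transmission lines and transformers) and the set $E^R$ of the same lines with reversed direction; each line has admittance $Y_{ij}=g_{ij}+\mathbf{i}\,b_{ij}$ (conductance $g_{ij}$, susceptance $b_{ij}$). The remaining network data (bus demands $S^d_i$, generator bounds $S^{gl}_i,S^{gu}_i$, voltage bounds $v^l_i,v^u_i$, phase-angle-difference limits $\theta^\Delta_{ij}$, thermal limits $s^u_{ij}$, generation cost coefficients $c_{0i},c_{1i},c_{2i}$, a slack bus $s$), the optimal AC-OPF dispatch cost $O^*>0$ of $\mathcal{N}$, the vector of conductance/susceptance ratios $\mathbf{r}=(r_{ij})_{(i,j)\in E}$, and the partition of lines by voltage level ($E(v)$ = lines at voltage level $v\in VL(\mathcal{N})$, $n_v=|E(v)|$, each line in exactly one $E(v)$) are public. Write $\mathrm{cost}(S^g_i)=c_{2i}(\Re S^g_i)^2+c_{1i}\Re S^g_i+c_{0i}$. Laplace distribution: $\mathrm{Lap}(\lambda')$ has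 density $\frac{1}{2\lambda'}e^{-|x|/\lambda'}$; $\mathrm{Lap}(\lambda')^n$ denotes $n$ i.i.d. draws. Differential privacy: two private datasets $D,D'$ (here the line-parameter vectors) are $\alpha$-adjacent, $D\sim_\alpha D'$, if there is a single coordinate $i$ with $|D_i-D'_i|\le\alpha$ and $D_j=D'_j$ for all $j\neq i$. A randomized algorithm $\mathcal{A}$ is $\epsilon$-differentially private if for all $D\sim_\alpha D'$ and all measurable output sets $O$, $\Pr[\mathcal{A}(D)\in O]\le e^{\epsilon}\Pr[\mathcal{A}(D')\in O]$. PLO mechanism (input $\mathcal{N},O^*,\epsilon,\alpha,\beta$; all noise draws independent): 1. $\tilde{\mathbf{g}}=\mathbf{g}+z$, $z\sim\mathrm{Lap}(3\alpha/\epsilon)^n$. 2. $\tilde b_{ij}=r_{ij}\tilde g_{ij}$ for each line. 3. For each voltage level $v$: $\tilde\mu^v_{\mathbf g}=\frac{1}{n_v}\sum_{(i,j)\in E(v)}g_{ij}+\mathrm{Lap}(3\alpha/(n_v\epsilon))$ and $\tilde\mu^v_{\mathbf b}=\frac{1}{n_v}\sum_{(i,j)\in E(v)}b_{ij}+\mathrm{Lap}(3\alpha/(n_v\epsilon))$. 4. Solve (selecting a solution by any fixed rule) the problem with variables $S^g_i,V_i$ ($i\in N$), $\dot Y_{ij}=\dot g_{ij}+\mathbf{i}\dot b_{ij}$ and $S_{ij}$ ($(i,j)\in E\cup E^R$): minimize $\|\dot{\mathbf g}-\tilde{\mathbf g}\|_2^2+\|\dot{\mathbf b}-\tilde{\mathbf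 b}\|_2^2$ subject to $\angle V_s=0$; $v^l_i\le|V_i|\le v^u_i$; $-\theta^\Delta_{ij}\le\angle(V_iV_j^* )\le\theta^\Delta_{ij}$ for $(i,j)\in E$; $S^{gl}_i\le S^g_i\le S^{gu}_i$; $|S_{ij}|\le s^u_{ij}$; $S^g_i-S^d_i=\sum_{(i,j)\in E\cup E^R}S_{ij}$; $\frac{|\sum_{i\in N}\mathrm{cost}(S^g_i)-O^*|}{O^*}\le\beta$; $S_{ij}=\dot Y^*_{ij}|V_i|^2-\dot Y^*_{ij}V_iV_j^*$; and for each $v$ and each line in $E(v)\cup E^R(v)$: $\tilde\mu^v_{\mathbf g}/\lambda\le\dot g_{ij}\le\lambda\tilde\mu^v_{\mathbf g}$, $\tilde\mu^v_{\mathbf b}/\lambda\le\dot b_{ij}\le\lambda\tilde\mu^v_{\mathbf b}$. Output: $\dot{\mathcal{N}}$, identical to $\mathcal{N}$ except that the admittances are replaced by $\dot Y$. *)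

theory Defs
  imports "HOL-Probability.Probability"
begin

text \<open>Public part of a power network description. Lines are directed pairs of buses;
  the private conductances g and susceptances b are passed separately.\<close>

record ('bus, 'v) pnet =
  buses  :: "'bus set"
  lines  :: "('bus \<times> 'bus) set"
  Sd     :: "'bus \<Rightarrow> complex"
  Sgl    :: "'bus \<Rightarrow> complex"
  Sgu    :: "'bus \<Rightarrow> complex"
  vl     :: "'bus \<Rightarrow> real"
  vu     :: "'bus \<Rightarrow> real"
  thetaD :: "'bus \<times> 'bus \<Rightarrow> real"
  su     :: "'bus \<times> 'bus \<Rightarrow> real"
  c0     :: "'bus \<Rightarrow> real"
  c1     :: "'bus \<Rightarrow> real"
  c2     :: "'bus \<Rightarrow> real"
  slack  :: "'bus"
  ratio  :: "'bus \<times> 'bus \<Rightarrow> real"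
  vlevel :: "'bus \<times> 'bus \<Rightarrow> 'v"

definition rlines :: "('bus, 'v) pnet \<Rightarrow> ('bus \<times> 'bus) set" where
  "rlines N = prod.swap ` lines N"

definition alines :: "('bus, 'v) pnet \<Rightarrow> ('bus \<times> 'bus) set" where
  "alines N = lines N \<union> rlines N"

definition VL :: "('bus, 'v) pnet \<Rightarrow> 'v set" where
  "VL N = vlevel N ` lines N"

definition Ev :: "('bus, 'v) pnet \<Rightarrow> 'v \<Rightarrow> ('bus \<times> 'bus) set" where
  "Ev N v = {l \<in> lines N. vlevel N l = v}"

definition nv :: "('bus, 'v) pnet \<Rightarrow> 'v \<Rightarrow> nat" where
  "nv N v = card (Ev N v)"

definition lvl :: "('bus, 'v) pnet \<Rightarrow> 'bus \<times> 'bus \<Rightarrow> 'v" where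
  "lvl N l = (if l \<in> lines N then vlevel N l else vlevel N (prod.swap l))"

definition lvmean :: "('bus, 'v) pnet \<Rightarrow> ('bus \<times> 'bus \<Rightarrow> real) \<Rightarrow> 'v \<Rightarrow> real" where
  "lvmean N x v = (\<Sum>l\<in>Ev N v. x l) / real (nv N v)"

definition gen_cost :: "('bus, 'v) pnet \<Rightarrow> ('bus \<Rightarrow> complex) \<Rightarrow> 'bus \<Rightarrow> real" where
  "gen_cost N Sg i = c2 N i * (Re (Sg i))\<^sup>2 + c1 N i * Re (Sg i) + c0 N i"

definition lap_density :: "real \<Rightarrow> real \<Rightarrow> real" where
  "lap_density l x = exp (- \<bar>x\<bar> / l) / (2 * l)"

definition laplace :: "real \<Rightarrow> real measure" where
  "laplace l = density lborel (\<lambda>x. ennreal (lap_density l x))"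

text \<open>Feasible set of the optimization problem of step 4 (complex bounds componentwise).\<close>
definition plo_feasible ::
  "('bus, 'v) pnet \<Rightarrow> real \<Rightarrow> real \<Rightarrow> real \<Rightarrow> ('v \<Rightarrow> real) \<Rightarrow> ('v \<Rightarrow> real) \<Rightarrow>
   ('bus \<Rightarrow> complex) \<Rightarrow> ('bus \<Rightarrow> complex) \<Rightarrow> ('bus \<times> 'bus \<Rightarrow> complex) \<Rightarrow> ('bus \<times> 'bus \<Rightarrow> complex) \<Rightarrow> bool"
where
  "plo_feasible N Ostar beta lam mug mub Sg V Yd S \<longleftrightarrow>
     Arg (V (slack N)) = 0
   \<and> (\<forall>i\<in>buses N. vl N i \<le> cmod (V i) \<and> cmod (V i) \<le> vu N i)
   \<and> (\<forall>(i,j)\<in>lines N. - thetaD N (i,j) \<le> Arg (V i * cnj (V j)) \<and> Arg (V i * cnj (V j)) \<le> thetaD N (i,j))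
   \<and> (\<forall>i\<in>buses N. Re (Sgl N i) \<le> Re (Sg i) \<and> Re (Sg i) \<le> Re (Sgu N i)
                 \<and> Im (Sgl N i) \<le> Im (Sg i) \<and> Im (Sg i) \<le> Im (Sgu N i))
   \<and> (\<forall>l\<in>alines N. cmod (S l) \<le> su N l)
   \<and> (\<forall>i\<in>buses N. Sg i - Sd N i = (\<Sum>l\<in>{l\<in>alines N. fst l = i}. S l))
   \<and> \<bar>(\<Sum>i\<in>buses N. gen_cost N Sg i) - Ostar\<bar> / Ostar \<le> beta
   \<and> (\<forall>(i,j)\<in>alines N. S (i,j) = cnj (Yd (i,j)) * complex_of_real ((cmod (V i))\<^sup>2)
                                  - cnj (Yd (i,j)) * V i * cnj (V j))
   \<and> (\<forall>l\<in>alines N. mug (lvl N l) / lam \<le> Re (Yd l) \<and> Re (Yd l) \<le> lam * mug (lvl N l)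
                  \<and> mub (lvl N l) / lam \<le> Im (Yd l) \<and> Im (Yd l) \<le> lam * mub (lvl N l))"

definition plo_obj :: "('bus, 'v) pnet \<Rightarrow> ('bus \<times> 'bus \<Rightarrow> real) \<Rightarrow> ('bus \<times> 'bus \<Rightarrow> complex) \<Rightarrow> real" where
  "plo_obj N gt Yd = (\<Sum>l\<in>lines N. (Re (Yd l) - gt l)\<^sup>2 + (Im (Yd l) - ratio N l * gt l)\<^sup>2)"

definition plo_optimal where
  "plo_optimal N Ostar beta lam gt mug mub Sg V Yd S \<longleftrightarrow>
     plo_feasible N Ostar beta lam mug mub Sg V Yd S
   \<and> (\<forall>Sg' V' Yd' S'. plo_feasible N Ostar beta lam mug mub Sg' V' Yd' S' \<longrightarrow>
        plo_obj N gt Yd \<le> plo_obj N gt Yd')"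

text \<open>A fixed selection rule: whenever the step-4 problem has an optimal solution,
  it returns the admittances of one of them.\<close>
definition valid_selector ::
  "('bus, 'v) pnet \<Rightarrow> real \<Rightarrow> real \<Rightarrow> real \<Rightarrow>
   (('bus \<times> 'bus \<Rightarrow> real) \<times> ('v \<Rightarrow> real) \<times> ('v \<Rightarrow> real) \<Rightarrow> ('bus \<times> 'bus \<Rightarrow> complex)) \<Rightarrow> bool" where
  "valid_selector N Ostar beta lam sel \<longleftrightarrow>
     (\<forall>gt mug mub. (\<exists>Sg V Yd S. plo_optimal N Ostar beta lam gt mug mub Sg V Yd S) \<longrightarrow>
        (\<exists>Sg V S. plo_optimal N Ostar beta lam gt mug mub Sg V (sel (gt, mug, mub)) S))"

definition plo_input_space :: "('bus, 'v) pnet \<Rightarrow> (('bus \<times> 'bus \<Rightarrow> real) \<times> ('v \<Rightarrow> real) \<times> ('v \<Rightarrow> real)) measure" where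
  "plo_input_space N = PiM (lines N) (\<lambda>_. borel) \<Otimes>\<^sub>M (PiM (VL N) (\<lambda>_. borel) \<Otimes>\<^sub>M PiM (VL N) (\<lambda>_. borel))"

definition plo_noise :: "('bus, 'v) pnet \<Rightarrow> real \<Rightarrow> real \<Rightarrow> (('bus \<times> 'bus \<Rightarrow> real) \<times> ('v \<Rightarrow> real) \<times> ('v \<Rightarrow> real)) measure" where
  "plo_noise N alpha eps =
     PiM (lines N) (\<lambda>_. laplace (3 * alpha / eps)) \<Otimes>\<^sub>M
     (PiM (VL N) (\<lambda>v. laplace (3 * alpha / (real (nv N v) * eps))) \<Otimes>\<^sub>M
      PiM (VL N) (\<lambda>v. laplace (3 * alpha / (real (nv N v) * eps))))"

text \<open>Output distribution of PLO on private data (g, b); the released network is the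
  public data of N together with the admittances returned by the selector.\<close>
definition plo_mech where
  "plo_mech N Ostar alpha eps beta lam sel Mout g b =
     distr (plo_noise N alpha eps) Mout
       (\<lambda>(z, wg, wb). sel (restrict (\<lambda>l. g l + z l) (lines N),
                            restrict (\<lambda>v. lvmean N g v + wg v) (VL N),
                            restrict (\<lambda>v. lvmean N b v + wb v) (VL N)))"

definition alpha_adj :: "('bus, 'v) pnet \<Rightarrow> real \<Rightarrow>
    ('bus \<times> 'bus \<Rightarrow> real) \<times> ('bus \<times> 'bus \<Rightarrow> real) \<Rightarrow>
    ('bus \<times> 'bus \<Rightarrow> real) \<times> ('bus \<times> 'bus \<Rightarrow> real) \<Rightarrow> bool" where
  "alpha_adj N alpha D D' \<longleftrightarrow>
     (\<exists>l\<in>lines N. \<bar>fst D l - fst D' l\<bar> \<le> alpha \<and> \<bar>snd D l - snd D' l\<bar> \<le> alpha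
        \<and> (\<forall>l'\<in>lines N - {l}. fst D l' = fst D' l' \<and> snd D l' = snd D' l'))"

definition differentially_private :: "('d \<Rightarrow> 'o measure) \<Rightarrow> ('d \<Rightarrow> 'd \<Rightarrow> bool) \<Rightarrow> real \<Rightarrow> bool" where
  "differentially_private M adj eps \<longleftrightarrow>
     (\<forall>D D' A. adj D D' \<longrightarrow> A \<in> sets (M D) \<longrightarrow> measure (M D) A \<le> exp eps * measure (M D') A)"

end

theory Submission
  imports Defs
begin

(* The noisy inputs of the optimisation step are the private data translated by independent
   Laplace noise, so their law has a Lebesgue density that is a product of Laplace densities
   centred at g, at the level means of g and at the level means of b.  Adjacent data differ in
   one line by at most alpha, so g moves by at most alpha in l1-norm and the level means move by
   at most alpha in the l1-norm weighted by the level sizes n_v.  With scales 3 alpha/eps and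
   3 alpha/(n_v eps) each of the three factors of the density therefore changes by at most a
   factor exp(eps/3).  The released admittances are a measurable function of the noisy inputs,
   and a pointwise bound between densities survives any such post-processing. *)

lemma distr_PiM_translate:
  fixes M :: "'i \<Rightarrow> real measure"
  assumes I: "finite I" and sets_M: "\<And>i. sets (M i) = sets borel" and "\<And>i. finite_measure (M i)"
  shows "distr (PiM I M) (PiM I (\<lambda>_. borel)) (\<lambda>z. restrict (\<lambda>i. c i + z i) I)
       = PiM I (\<lambda>i. distr (M i) borel ((+) (c i)))"
proof -
  have [measurable_cong]: "sets (M i) = sets borel" for i by (rule sets_M)
  have space_M: "space (M i) = UNIV" for i using sets_eq_imp_space_eq[OF sets_M[of i]] by simp
  interpret M: product_sigma_finite M
    unfolding product_sigma_finite_def using assms(3) finite_measure.sigma_finite_measure by blast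
  interpret T: product_sigma_finite "\<lambda>i. distr (M i) borel ((+) (c i))"
    unfolding product_sigma_finite_def
    by (intro allI finite_measure.sigma_finite_measure finite_measure.finite_measure_distr assms(3))
       simp
  show ?thesis
  proof (rule T.PiM_eqI[OF I])
    show "sets (distr (PiM I M) (PiM I (\<lambda>_. borel)) (\<lambda>z. restrict (\<lambda>i. c i + z i) I))
        = sets (PiM I (\<lambda>i. distr (M i) borel ((+) (c i))))"
      by (simp only: sets_distr) (rule sets_PiM_cong; simp)
  next
    fix A assume A: "\<And>i. i \<in> I \<Longrightarrow> A i \<in> sets (distr (M i) borel ((+) (c i)))"
    have "(\<lambda>z. restrict (\<lambda>i. c i + z i) I) -` Pi\<^sub>E I A \<inter> space (PiM I M) = Pi\<^sub>E I (\<lambda>i. (+) (c i) -` A i)"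
      by (auto simp: space_PiM space_M PiE_def Pi_def)
    then have "emeasure (distr (PiM I M) (PiM I (\<lambda>_. borel)) (\<lambda>z. restrict (\<lambda>i. c i + z i) I)) (Pi\<^sub>E I A)
        = emeasure (PiM I M) (Pi\<^sub>E I (\<lambda>i. (+) (c i) -` A i))"
      using A by (subst emeasure_distr) (auto intro!: sets_PiM_I_finite I)
    also have "\<dots> = (\<Prod>i\<in>I. emeasure (M i) ((+) (c i) -` A i))"
      using A by (intro M.emeasure_PiM I)
        (auto simp: sets_M intro!: measurable_sets_borel[where M=borel])
    also have "\<dots> = (\<Prod>i\<in>I. emeasure (distr (M i) borel ((+) (c i))) (A i))"
      using A by (intro prod.cong refl) (simp add: emeasure_distr space_M)
    finally show "emeasure (distr (PiM I M) (PiM I (\<lambda>_. borel)) (\<lambda>z. restrict (\<lambda>i. c i + z i) I))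
        (Pi\<^sub>E I A) = (\<Prod>i\<in>I. emeasure (distr (M i) borel ((+) (c i))) (A i))" .
  qed
qed

lemma PiM_density_lborel:
  fixes f :: "'i \<Rightarrow> real \<Rightarrow> ennreal"
  assumes I: "finite I" and [measurable]: "\<And>i. f i \<in> borel_measurable borel"
    and "\<And>i. finite_measure (density lborel (f i))"
  shows "PiM I (\<lambda>i. density lborel (f i)) = density (PiM I (\<lambda>_. lborel)) (\<lambda>x. \<Prod>i\<in>I. f i (x i))"
proof -
  interpret L: product_sigma_finite "\<lambda>_. lborel :: real measure"
    unfolding product_sigma_finite_def by (simp add: sigma_finite_lborel)
  interpret D: product_sigma_finite "\<lambda>i. density lborel (f i)"
    unfolding product_sigma_finite_def using assms(3) finite_measure.sigma_finite_measure by blast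
  show ?thesis
  proof (rule D.PiM_eqI[OF I, symmetric])
    show "sets (density (PiM I (\<lambda>_. lborel)) (\<lambda>x. \<Prod>i\<in>I. f i (x i)))
        = sets (PiM I (\<lambda>i. density lborel (f i)))"
      by (simp only: sets_density) (rule sets_PiM_cong; simp)
  next
    fix A assume A: "\<And>i. i \<in> I \<Longrightarrow> A i \<in> sets (density lborel (f i))"
    have "Pi\<^sub>E I A \<in> sets (PiM I (\<lambda>_. lborel))"
      using A by (intro sets_PiM_I_finite I) auto
    then have "emeasure (density (PiM I (\<lambda>_. lborel)) (\<lambda>x. \<Prod>i\<in>I. f i (x i))) (Pi\<^sub>E I A)
        = (\<integral>\<^sup>+x. (\<Prod>i\<in>I. f i (x i)) * indicator (Pi\<^sub>E I A) x \<partial>PiM I (\<lambda>_. lborel))"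
      by (subst emeasure_density) auto
    also have "\<dots> = (\<integral>\<^sup>+x. (\<Prod>i\<in>I. f i (x i) * indicator (A i) (x i)) \<partial>PiM I (\<lambda>_. lborel))"
      by (intro nn_integral_cong)
         (auto simp: prod.distrib indicator_def space_PiM PiE_iff I prod_zero_iff split: if_splits)
    also have "\<dots> = (\<Prod>i\<in>I. \<integral>\<^sup>+y. f i y * indicator (A i) y \<partial>lborel)"
      using A by (intro L.product_nn_integral_prod I) auto
    also have "\<dots> = (\<Prod>i\<in>I. emeasure (density lborel (f i)) (A i))"
      using A by (intro prod.cong refl) (simp add: emeasure_density)
    finally show "emeasure (density (PiM I (\<lambda>_. lborel)) (\<lambda>x. \<Prod>i\<in>I. f i (x i))) (Pi\<^sub>E I A)
        = (\<Prod>i\<in>I. emeasure (density lborel (f i)) (A i))" .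
  qed
qed

lemma distr_pair_eq_density:
  assumes [measurable]: "T1 \<in> M1 \<rightarrow>\<^sub>M X1" "T2 \<in> M2 \<rightarrow>\<^sub>M X2"
    and "f1 \<in> borel_measurable B1" "f2 \<in> borel_measurable B2"
    and "prob_space M2" and "sigma_finite_measure B2"
    and distr1: "distr M1 X1 T1 = density B1 f1" and distr2: "distr M2 X2 T2 = density B2 f2"
  shows "distr (M1 \<Otimes>\<^sub>M M2) (X1 \<Otimes>\<^sub>M X2) (\<lambda>(x, y). (T1 x, T2 y))
       = density (B1 \<Otimes>\<^sub>M B2) (\<lambda>(x, y). f1 x * f2 y)"
proof -
  have "sigma_finite_measure (distr M2 X2 T2)"
    by (intro prob_space_imp_sigma_finite prob_space.prob_space_distr[OF \<open>prob_space M2\<close>]) simp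
  then have "distr (M1 \<Otimes>\<^sub>M M2) (X1 \<Otimes>\<^sub>M X2) (\<lambda>(x, y). (T1 x, T2 y)) = density B1 f1 \<Otimes>\<^sub>M density B2 f2"
    by (simp add: pair_measure_distr flip: distr1 distr2)
  also have "\<dots> = density (B1 \<Otimes>\<^sub>M B2) (\<lambda>(x, y). f1 x * f2 y)"
    using \<open>sigma_finite_measure (distr M2 X2 T2)\<close> assms(3-6)
    by (intro pair_measure_density) (simp_all flip: distr2)
  finally show ?thesis .
qed

lemma measure_distr_density_le:
  fixes c :: real
  assumes [measurable]: "f \<in> borel_measurable M" "f' \<in> borel_measurable M" "h \<in> M \<rightarrow>\<^sub>M N"
    and "finite_measure (density M f')" and "0 \<le> c"
    and le: "\<And>x. x \<in> space M \<Longrightarrow> f x \<le> ennreal c * f' x" and [measurable]: "A \<in> sets N"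
  shows "measure (distr (density M f) N h) A \<le> c * measure (distr (density M f') N h) A"
proof -
  let ?C = "h -` A \<inter> space M"
  have [measurable]: "?C \<in> sets M" by measurable
  have "emeasure (density M f) ?C = (\<integral>\<^sup>+x. f x * indicator ?C x \<partial>M)"
    by (simp add: emeasure_density)
  also have "\<dots> \<le> (\<integral>\<^sup>+x. ennreal c * (f' x * indicator ?C x) \<partial>M)"
    using le by (intro nn_integral_mono) (auto simp: mult.assoc[symmetric] intro!: mult_right_mono)
  also have "\<dots> = ennreal c * emeasure (density M f') ?C"
    by (simp add: nn_integral_cmult emeasure_density)
  finally have "emeasure (density M f) ?C \<le> ennreal c * emeasure (density M f') ?C" .
  then have "enn2real (emeasure (density M f) ?C) \<le> enn2real (ennreal c * emeasure (density M f') ?C)"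
    using finite_measure.emeasure_finite[OF assms(4)]
    by (intro enn2real_mono) (simp_all add: ennreal_mult_less_top top.not_eq_extremum)
  then have "measure (density M f) ?C \<le> c * measure (density M f') ?C"
    using \<open>0 \<le> c\<close> by (simp add: measure_def enn2real_mult)
  then show ?thesis
    by (simp add: measure_distr)
qed

lemma lap_density_nonneg: "0 < s \<Longrightarrow> 0 \<le> lap_density s x"
  by (simp add: lap_density_def)

lemma borel_measurable_lap_density[measurable]: "lap_density s \<in> borel_measurable borel"
  unfolding lap_density_def by measurable

lemma sets_laplace[measurable_cong, simp]: "sets (laplace s) = sets borel"
  by (simp add: laplace_def)

lemma prob_space_laplace:
  assumes "0 < s"
  shows "prob_space (laplace s)"
proof -
  let ?e = "exponential_density (1 / s)"
  have "(\<integral>\<^sup>+x. ennreal (?e x) \<partial>lborel) = 1"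
    using prob_space.emeasure_space_1[OF prob_space_exponential_density] assms
    by (simp add: emeasure_density)
  then have "has_bochner_integral lborel ?e 1"
    using assms by (intro has_bochner_integral_nn_integral) (auto simp: exponential_density_nonneg)
  then have "has_bochner_integral lborel (\<lambda>x. ?e x / 2) (1 / 2)"
    by (rule has_bochner_integral_divide_zero)
  moreover have "?e x / 2 = indicator {0..} x *\<^sub>R lap_density s x" for x
    using assms by (simp add: exponential_density_def lap_density_def indicator_def field_simps)
  ultimately have "has_bochner_integral lborel (lap_density s) (2 *\<^sub>R (1 / 2))"
    by (intro has_bochner_integral_even_function) (simp_all add: lap_density_def)
  then have "(\<integral>\<^sup>+x. ennreal (lap_density s x) \<partial>lborel) = 1"
    using assms lap_density_nonneg
    by (simp add: has_bochner_integral_iff nn_integral_eq_integral)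
  then show ?thesis
    unfolding laplace_def by (intro prob_spaceI) (simp add: emeasure_density)
qed

lemma finite_measure_laplace: "finite_measure (laplace s)"
proof (cases "0 < s")
  case True
  then show ?thesis
    using prob_space_laplace prob_space.finite_measure by blast
next
  case False
  then have "laplace s = density lborel (\<lambda>_. 0)"
    unfolding laplace_def lap_density_def
    by (intro density_cong) (auto simp: ennreal_eq_0_iff intro!: AE_I2 divide_nonneg_nonpos)
  then show ?thesis
    by (auto intro!: finite_measureI simp: emeasure_density)
qed

lemma distr_laplace_translate:
  "distr (laplace s) borel ((+) c) = density lborel (\<lambda>x. ennreal (lap_density s (x - c)))"
proof -
  have "density lborel (\<lambda>x. ennreal (lap_density s (x - c)))
      = density (distr lborel borel ((+) c)) (\<lambda>x. ennreal (lap_density s (x - c)))"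
    by (simp add: lborel_distr_plus)
  also have "\<dots> = distr (laplace s) borel ((+) c)"
    unfolding laplace_def by (subst density_distr) auto
  finally show ?thesis ..
qed

lemma lap_density_translate_le:
  assumes "0 < s"
  shows "lap_density s (x - c) \<le> exp (\<bar>c - c'\<bar> / s) * lap_density s (x - c')"
proof -
  have "- \<bar>x - c\<bar> \<le> \<bar>c - c'\<bar> + - \<bar>x - c'\<bar>"
    by linarith
  then have "- \<bar>x - c\<bar> / s \<le> \<bar>c - c'\<bar> / s + - \<bar>x - c'\<bar> / s"
    using assms by (simp add: field_simps)
  then have "exp (- \<bar>x - c\<bar> / s) \<le> exp (\<bar>c - c'\<bar> / s) * exp (- \<bar>x - c'\<bar> / s)"
    by (simp flip: exp_add)
  then show ?thesis
    using assms unfolding lap_density_def by (simp add: divide_right_mono)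
qed

definition lap_prod :: "'i set \<Rightarrow> ('i \<Rightarrow> real) \<Rightarrow> ('i \<Rightarrow> real) \<Rightarrow> ('i \<Rightarrow> real) \<Rightarrow> real" where
  "lap_prod I s c x = (\<Prod>i\<in>I. lap_density (s i) (x i - c i))"

lemma lap_prod_nonneg: "(\<And>i. i \<in> I \<Longrightarrow> 0 < s i) \<Longrightarrow> 0 \<le> lap_prod I s c x"
  unfolding lap_prod_def by (intro prod_nonneg) (auto intro: lap_density_nonneg)

lemma borel_measurable_lap_prod[measurable]:
  "(\<lambda>x. lap_prod I s c x) \<in> borel_measurable (PiM I (\<lambda>_. lborel))"
  unfolding lap_prod_def by measurable

lemma lap_prod_le_exp:
  assumes "finite I" and "\<And>i. i \<in> I \<Longrightarrow> 0 < s i" and "(\<Sum>i\<in>I. \<bar>c i - c' i\<bar> / s i) \<le> t"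
  shows "lap_prod I s c x \<le> exp t * lap_prod I s c' x"
proof -
  have "lap_prod I s c x \<le> (\<Prod>i\<in>I. exp (\<bar>c i - c' i\<bar> / s i) * lap_density (s i) (x i - c' i))"
    unfolding lap_prod_def using assms(2)
    by (intro prod_mono) (auto intro: lap_density_nonneg lap_density_translate_le)
  also have "\<dots> = exp (\<Sum>i\<in>I. \<bar>c i - c' i\<bar> / s i) * lap_prod I s c' x"
    using assms(1) by (simp add: lap_prod_def exp_sum prod.distrib)
  also have "\<dots> \<le> exp t * lap_prod I s c' x"
    using assms by (intro mult_right_mono lap_prod_nonneg) auto
  finally show ?thesis .
qed

lemma lap_prod_const_scale_le:
  assumes "finite I" and "0 < s" and "(\<Sum>i\<in>I. \<bar>c i - c' i\<bar>) \<le> d"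
  shows "lap_prod I (\<lambda>_. s) c x \<le> exp (d / s) * lap_prod I (\<lambda>_. s) c' x"
proof (rule lap_prod_le_exp)
  show "(\<Sum>i\<in>I. \<bar>c i - c' i\<bar> / s) \<le> d / s"
    using assms by (simp add: divide_right_mono flip: sum_divide_distrib)
qed (use assms in auto)

lemma distr_PiM_laplace_translate:
  assumes I: "finite I" and s: "\<And>i. i \<in> I \<Longrightarrow> 0 < s i"
  shows "distr (PiM I (\<lambda>i. laplace (s i))) (PiM I (\<lambda>_. borel)) (\<lambda>z. restrict (\<lambda>i. c i + z i) I)
       = density (PiM I (\<lambda>_. lborel)) (\<lambda>x. ennreal (lap_prod I s c x))"
proof -
  have "distr (PiM I (\<lambda>i. laplace (s i))) (PiM I (\<lambda>_. borel)) (\<lambda>z. restrict (\<lambda>i. c i + z i) I)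
      = PiM I (\<lambda>i. density lborel (\<lambda>x. ennreal (lap_density (s i) (x - c i))))"
    by (simp add: distr_PiM_translate I finite_measure_laplace flip: distr_laplace_translate)
  also have "\<dots> = density (PiM I (\<lambda>_. lborel)) (\<lambda>x. \<Prod>i\<in>I. ennreal (lap_density (s i) (x i - c i)))"
    by (intro PiM_density_lborel I)
       (simp_all add: finite_measure_laplace finite_measure.finite_measure_distr
         flip: distr_laplace_translate)
  also have "\<dots> = density (PiM I (\<lambda>_. lborel)) (\<lambda>x. ennreal (lap_prod I s c x))"
    using s by (intro density_cong) (auto simp: lap_prod_def prod_ennreal lap_density_nonneg)
  finally show ?thesis .
qed

lemma sum_abs_diff_le_single:
  fixes f f' :: "'a \<Rightarrow> real"
  assumes "finite L" and "l0 \<in> L" and "\<And>l. l \<in> L - {l0} \<Longrightarrow> f l = f' l" and "\<bar>f l0 - f' l0\<bar> \<le> a"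
  shows "(\<Sum>l\<in>L. \<bar>f l - f' l\<bar>) \<le> a"
  using assms by (simp add: sum.remove)

lemma finite_VL: "finite (lines N) \<Longrightarrow> finite (VL N)"
  by (simp add: VL_def)

lemma nv_pos:
  assumes "finite (lines N)" and "v \<in> VL N"
  shows "0 < nv N v"
proof -
  obtain l where "l \<in> lines N" and "v = vlevel N l"
    using assms(2) by (auto simp: VL_def)
  then have "l \<in> Ev N v"
    by (simp add: Ev_def)
  moreover have "finite (Ev N v)"
    using assms(1) by (simp add: Ev_def)
  ultimately show ?thesis
    unfolding nv_def by (auto simp: card_gt_0_iff)
qed

lemma sum_nv_lvmean_diff_le:
  assumes "finite (lines N)"
  shows "(\<Sum>v\<in>VL N. real (nv N v) * \<bar>lvmean N g v - lvmean N g' v\<bar>) \<le> (\<Sum>l\<in>lines N. \<bar>g l - g' l\<bar>)"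
proof -
  have fin: "finite (Ev N v)" for v
    using assms by (simp add: Ev_def)
  have "real (nv N v) * \<bar>lvmean N g v - lvmean N g' v\<bar> = \<bar>\<Sum>l\<in>Ev N v. g l - g' l\<bar>" for v
    using fin[of v] by (cases "Ev N v = {}") (simp_all add: lvmean_def nv_def sum_subtractf
      abs_mult[symmetric] right_diff_distrib flip: diff_divide_distrib)
  also have "\<bar>\<Sum>l\<in>Ev N v. g l - g' l\<bar> \<le> (\<Sum>l\<in>Ev N v. \<bar>g l - g' l\<bar>)" for v
    by (rule sum_abs)
  finally have "(\<Sum>v\<in>VL N. real (nv N v) * \<bar>lvmean N g v - lvmean N g' v\<bar>)
      \<le> (\<Sum>v\<in>VL N. \<Sum>l\<in>Ev N v. \<bar>g l - g' l\<bar>)"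
    by (intro sum_mono)
  also have "\<dots> = (\<Sum>l\<in>lines N. \<bar>g l - g' l\<bar>)"
    unfolding Ev_def VL_def using assms by (intro sum.group) auto
  finally show ?thesis .
qed

lemma lap_prod_lvmean_le:
  assumes L: "finite (lines N)" and "0 < s" and "(\<Sum>l\<in>lines N. \<bar>h l - h' l\<bar>) \<le> d"
  shows "lap_prod (VL N) (\<lambda>v. s / real (nv N v)) (lvmean N h) y
       \<le> exp (d / s) * lap_prod (VL N) (\<lambda>v. s / real (nv N v)) (lvmean N h') y"
proof (rule lap_prod_le_exp[OF finite_VL[OF L]])
  have "(\<Sum>v\<in>VL N. \<bar>lvmean N h v - lvmean N h' v\<bar> / (s / real (nv N v)))
      = (\<Sum>v\<in>VL N. real (nv N v) * \<bar>lvmean N h v - lvmean N h' v\<bar>) / s"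
    by (simp add: sum_divide_distrib ac_simps)
  also have "\<dots> \<le> d / s"
    using sum_nv_lvmean_diff_le[OF L, of h h'] assms by (simp add: divide_right_mono)
  finally show "(\<Sum>v\<in>VL N. \<bar>lvmean N h v - lvmean N h' v\<bar> / (s / real (nv N v))) \<le> d / s" .
qed (use assms nv_pos[OF L] in auto)

type_synonym ('bus, 'v) plo_input = "('bus \<times> 'bus \<Rightarrow> real) \<times> ('v \<Rightarrow> real) \<times> ('v \<Rightarrow> real)"

definition plo_perturb :: "('bus, 'v) pnet \<Rightarrow> ('bus \<times> 'bus \<Rightarrow> real) \<Rightarrow> ('bus \<times> 'bus \<Rightarrow> real) \<Rightarrow>
    ('bus, 'v) plo_input \<Rightarrow> ('bus, 'v) plo_input" where
  "plo_perturb N g b = (\<lambda>(z, wg, wb). (restrict (\<lambda>l. g l + z l) (lines N),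
     restrict (\<lambda>v. lvmean N g v + wg v) (VL N), restrict (\<lambda>v. lvmean N b v + wb v) (VL N)))"

definition plo_lborel :: "('bus, 'v) pnet \<Rightarrow> ('bus, 'v) plo_input measure" where
  "plo_lborel N =
     PiM (lines N) (\<lambda>_. lborel) \<Otimes>\<^sub>M (PiM (VL N) (\<lambda>_. lborel) \<Otimes>\<^sub>M PiM (VL N) (\<lambda>_. lborel))"

definition plo_noise_density :: "('bus, 'v) pnet \<Rightarrow> real \<Rightarrow> real \<Rightarrow>
    ('bus \<times> 'bus \<Rightarrow> real) \<Rightarrow> ('bus \<times> 'bus \<Rightarrow> real) \<Rightarrow> ('bus, 'v) plo_input \<Rightarrow> real" where
  "plo_noise_density N alpha eps g b = (\<lambda>(x, y, w).
     lap_prod (lines N) (\<lambda>_. 3 * alpha / eps) g x *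
     (lap_prod (VL N) (\<lambda>v. 3 * alpha / (real (nv N v) * eps)) (lvmean N g) y *
      lap_prod (VL N) (\<lambda>v. 3 * alpha / (real (nv N v) * eps)) (lvmean N b) w))"

lemma sets_plo_noise: "sets (plo_noise N alpha eps) = sets (plo_input_space N)"
  unfolding plo_noise_def plo_input_space_def by (intro sets_pair_measure_cong sets_PiM_cong) simp_all

lemma sets_plo_lborel: "sets (plo_lborel N) = sets (plo_input_space N)"
  unfolding plo_lborel_def plo_input_space_def by (intro sets_pair_measure_cong sets_PiM_cong) simp_all

lemma plo_perturb_measurable: "plo_perturb N g b \<in> plo_noise N alpha eps \<rightarrow>\<^sub>M plo_input_space N"
  unfolding measurable_cong_sets[OF sets_plo_noise refl] plo_perturb_def plo_input_space_def
  by measurable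

lemma borel_measurable_plo_noise_density[measurable]:
  "plo_noise_density N alpha eps g b \<in> borel_measurable (plo_lborel N)"
  unfolding plo_noise_density_def plo_lborel_def by measurable

lemma plo_noise_density_nonneg:
  assumes "finite (lines N)" and "0 < alpha" and "0 < eps"
  shows "0 \<le> plo_noise_density N alpha eps g b p"
  using assms nv_pos[OF assms(1)]
  by (auto simp: plo_noise_density_def intro!: mult_nonneg_nonneg lap_prod_nonneg split: prod.split)

lemma prob_space_plo_noise:
  assumes "finite (lines N)" and "0 < alpha" and "0 < eps"
  shows "prob_space (plo_noise N alpha eps)"
  unfolding plo_noise_def using assms nv_pos[OF assms(1)]
  by (intro prob_space_pair prob_space_PiM) (auto intro: prob_space_laplace)

lemma distr_plo_noise_perturb:
  assumes L: "finite (lines N)" and "0 < alpha" and "0 < eps"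
  shows "distr (plo_noise N alpha eps) (plo_input_space N) (plo_perturb N g b)
       = density (plo_lborel N) (\<lambda>p. ennreal (plo_noise_density N alpha eps g b p))"
proof -
  let ?a = "3 * alpha / eps" and ?s = "\<lambda>v. 3 * alpha / (real (nv N v) * eps)"
  let ?T = "\<lambda>I c z. restrict (\<lambda>i. c i + z i) I"
  have s_pos: "0 < ?s v" if "v \<in> VL N" for v
    using assms nv_pos[OF L that] by simp
  have lines_eq: "distr (PiM (lines N) (\<lambda>_. laplace ?a)) (PiM (lines N) (\<lambda>_. borel)) (?T (lines N) g)
      = density (PiM (lines N) (\<lambda>_. lborel)) (\<lambda>x. ennreal (lap_prod (lines N) (\<lambda>_. ?a) g x))"
    using distr_PiM_laplace_translate[OF L, of "\<lambda>_. ?a" g] assms by simp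
  have levels_eq: "distr (PiM (VL N) (\<lambda>v. laplace (?s v))) (PiM (VL N) (\<lambda>_. borel)) (?T (VL N) c)
      = density (PiM (VL N) (\<lambda>_. lborel)) (\<lambda>x. ennreal (lap_prod (VL N) ?s c x))" for c
    using distr_PiM_laplace_translate[OF finite_VL[OF L] s_pos] by simp
  have prob_levels: "prob_space (PiM (VL N) (\<lambda>v. laplace (?s v)))"
    using s_pos by (intro prob_space_PiM) (auto intro: prob_space_laplace)
  have sigma_finite_levels: "sigma_finite_measure (PiM (VL N) (\<lambda>_. lborel :: real measure))"
    by (intro product_sigma_finite.sigma_finite finite_VL L)
       (simp add: product_sigma_finite_def sigma_finite_lborel)
  have "distr (plo_noise N alpha eps) (plo_input_space N) (\<lambda>(z, y). (?T (lines N) g z,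
          (\<lambda>(wg, wb). (?T (VL N) (lvmean N g) wg, ?T (VL N) (lvmean N b) wb)) y))
      = density (plo_lborel N) (\<lambda>(x, y). ennreal (lap_prod (lines N) (\<lambda>_. ?a) g x) *
          (\<lambda>(y, w). ennreal (lap_prod (VL N) ?s (lvmean N g) y) *
                    ennreal (lap_prod (VL N) ?s (lvmean N b) w)) y)"
    unfolding plo_noise_def plo_input_space_def plo_lborel_def
    by (intro distr_pair_eq_density lines_eq levels_eq prob_space_pair prob_levels
          sigma_finite_levels sigma_finite_pair_measure measurable_restrict; measurable?)
  moreover have "0 \<le> lap_prod (lines N) (\<lambda>_. ?a) c x" for c x
    using assms by (intro lap_prod_nonneg) simp
  moreover have "0 \<le> lap_prod (VL N) ?s c x" for c x
    using s_pos by (rule lap_prod_nonneg)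
  ultimately show ?thesis
    unfolding plo_noise_density_def plo_perturb_def by (simp add: case_prod_beta' ennreal_mult)
qed

lemma plo_mech_eq_distr_density:
  assumes "finite (lines N)" and "0 < alpha" and "0 < eps" and "sel \<in> plo_input_space N \<rightarrow>\<^sub>M Mout"
  shows "plo_mech N Ostar alpha eps beta lam sel Mout g b
       = distr (density (plo_lborel N) (\<lambda>p. ennreal (plo_noise_density N alpha eps g b p))) Mout sel"
proof -
  have "plo_mech N Ostar alpha eps beta lam sel Mout g b
      = distr (plo_noise N alpha eps) Mout (sel \<circ> plo_perturb N g b)"
    unfolding plo_mech_def plo_perturb_def by (simp add: comp_def case_prod_beta')
  also have "\<dots> = distr (distr (plo_noise N alpha eps) (plo_input_space N) (plo_perturb N g b)) Mout sel"
    using assms(4) plo_perturb_measurable by (rule distr_distr[symmetric])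
  finally show ?thesis
    using assms(1-3) by (simp only: distr_plo_noise_perturb)
qed

lemma prob_space_plo_noise_density:
  assumes "finite (lines N)" and "0 < alpha" and "0 < eps"
  shows "prob_space (density (plo_lborel N) (\<lambda>p. ennreal (plo_noise_density N alpha eps g b p)))"
  using prob_space.prob_space_distr[OF prob_space_plo_noise[OF assms] plo_perturb_measurable]
  by (simp add: distr_plo_noise_perturb[OF assms])

lemma plo_noise_density_adjacent_le:
  assumes L: "finite (lines N)" and "0 < alpha" and "0 < eps"
    and adj: "alpha_adj N alpha (g, b) (g', b')"
  shows "plo_noise_density N alpha eps g b p \<le> exp eps * plo_noise_density N alpha eps g' b' p"
proof -
  let ?s = "\<lambda>v. 3 * alpha / (real (nv N v) * eps)"
  have level_scale: "?s = (\<lambda>v. 3 * alpha / eps / real (nv N v))"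
    by (simp add: mult.commute)
  obtain l0 where "l0 \<in> lines N" and "\<bar>g l0 - g' l0\<bar> \<le> alpha" and "\<bar>b l0 - b' l0\<bar> \<le> alpha"
    and "\<And>l. l \<in> lines N - {l0} \<Longrightarrow> g l = g' l \<and> b l = b' l"
    using adj unfolding alpha_adj_def by auto
  then have dg: "(\<Sum>l\<in>lines N. \<bar>g l - g' l\<bar>) \<le> alpha" and db: "(\<Sum>l\<in>lines N. \<bar>b l - b' l\<bar>) \<le> alpha"
    by (auto intro!: sum_abs_diff_le_single[OF L])
  have lines_le: "lap_prod (lines N) (\<lambda>_. 3 * alpha / eps) g x
      \<le> exp (eps / 3) * lap_prod (lines N) (\<lambda>_. 3 * alpha / eps) g' x" for x
    using lap_prod_const_scale_le[OF L _ dg, of "3 * alpha / eps"] assms by simp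
  have levels_le: "lap_prod (VL N) ?s (lvmean N h) y
      \<le> exp (eps / 3) * lap_prod (VL N) ?s (lvmean N h') y"
    if "(\<Sum>l\<in>lines N. \<bar>h l - h' l\<bar>) \<le> alpha" for h h' :: "'a \<times> 'a \<Rightarrow> real" and y
    using lap_prod_lvmean_le[OF L _ that, of "3 * alpha / eps"] assms unfolding level_scale by simp
  have lines_nonneg: "0 \<le> lap_prod (lines N) (\<lambda>_. 3 * alpha / eps) c x" for c x
    using assms by (intro lap_prod_nonneg) simp
  have levels_nonneg: "0 \<le> lap_prod (VL N) ?s c x" for c x
    using assms nv_pos[OF L] by (intro lap_prod_nonneg) simp
  obtain x y w where p: "p = (x, y, w)"
    by (cases p) auto
  have "plo_noise_density N alpha eps g b p
      \<le> (exp (eps / 3) * lap_prod (lines N) (\<lambda>_. 3 * alpha / eps) g' x) *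
        ((exp (eps / 3) * lap_prod (VL N) ?s (lvmean N g') y) *
         (exp (eps / 3) * lap_prod (VL N) ?s (lvmean N b') w))"
    unfolding p plo_noise_density_def prod.case
    using lines_le levels_le[OF dg] levels_le[OF db] lines_nonneg levels_nonneg
    by (intro mult_mono) (simp_all add: mult_nonneg_nonneg)
  also have "\<dots> = exp (eps / 3 + eps / 3 + eps / 3) * plo_noise_density N alpha eps g' b' p"
    unfolding p plo_noise_density_def prod.case exp_add by (simp only: ac_simps)
  finally show ?thesis
    by simp
qed

theorem theorem4:
  fixes N :: "('bus, 'v) pnet" and Ostar alpha eps beta lam :: real
    and sel :: "('bus \<times> 'bus \<Rightarrow> real) \<times> ('v \<Rightarrow> real) \<times> ('v \<Rightarrow> real) \<Rightarrow> ('bus \<times> 'bus \<Rightarrow> complex)"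
    and Mout :: "('bus \<times> 'bus \<Rightarrow> complex) measure"
  assumes "finite (buses N)" and "finite (lines N)" and "lines N \<subseteq> buses N \<times> buses N"
    and "slack N \<in> buses N" and "Ostar > 0"
    and "alpha > 0" and "eps > 0" and "beta > 0" and "lam > 0"
    and "valid_selector N Ostar beta lam sel"
    and "sel \<in> plo_input_space N \<rightarrow>\<^sub>M Mout"
  shows "differentially_private
           (\<lambda>(g, b). plo_mech N Ostar alpha eps beta lam sel Mout g b) (alpha_adj N alpha) eps"
  unfolding differentially_private_def
proof (intro allI impI)
  note L = assms(2) and pos = assms(6,7) and sel = assms(11)
  fix D D' A
  assume adj: "alpha_adj N alpha D D'"
    and A: "A \<in> sets ((\<lambda>(g, b). plo_mech N Ostar alpha eps beta lam sel Mout g b) D)"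
  obtain g b g' b' where D: "D = (g, b)" and D': "D' = (g', b')"
    by (cases D, cases D')
  have sel_measurable: "sel \<in> plo_lborel N \<rightarrow>\<^sub>M Mout"
    using sel by (simp add: measurable_cong_sets[OF sets_plo_lborel refl])
  have density_le: "ennreal (plo_noise_density N alpha eps g b p)
      \<le> ennreal (exp eps) * ennreal (plo_noise_density N alpha eps g' b' p)" for p
    using plo_noise_density_adjacent_le[OF L pos adj[unfolded D D']] plo_noise_density_nonneg[OF L pos]
    by (simp add: ennreal_leI flip: ennreal_mult)
  show "measure ((\<lambda>(g, b). plo_mech N Ostar alpha eps beta lam sel Mout g b) D) A
      \<le> exp eps * measure ((\<lambda>(g, b). plo_mech N Ostar alpha eps beta lam sel Mout g b) D') A"
    using A unfolding D D' prod.case plo_mech_eq_distr_density[OF L pos sel]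
    by (intro measure_distr_density_le sel_measurable density_le prob_space.finite_measure
        prob_space_plo_noise_density[OF L pos]) auto
qed

end
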